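(* In the ef-MCA model of the context with a two-parameter exponential family distribution $p(y;\vec{\eta})$ whose sufficient statistics satisfy $T_1(y)=y$, the condition on $W_{dh}$ (for the derivative of the lower bound $\mathcal{F}(q,\Theta)$ with respect to $W_{dh}$ and $V_{dh}$ to vanish, together with the corresponding condition $V_{dh}=\sum_n\langle\mathcal{A}_{dh}\rangle_{q^{(n)}}T_2(y_d^{(n)})/\sum_n\langle\mathcal{A}_{dh}\rangle_{q^{(n)}}$) is $$W_{dh}=\frac{\sum_{n=1}^N\langle\mathcal{A}_{dh}(\vec{s},\Theta)\rangle_{q^{(n)}}\,y_d^{(n)}}{\sum_{n=1}^N\langle\mathcal{A}_{dh}(\vec{s},\Theta)\rangle_{q^{(n)}}}.$$
   Context: Exponential family: $p(y;\vec{\eta})=h(y)\exp(\vec{\eta}^T\vec{T}(y)-A(\vec{\eta}))$, $\vec{T}(y)=(T_1(y),T_2(y))^T$, finite $A$. Mean value parameters $\vec{w}=\langle\vec{T}(y)\rangle_{p(y;\vec{\eta})}$, assumed invertible with inverse $\vec{\Phi}$. $F(w,v)=\langle y\rangle_{p(y;\vec{\Phi}(w,v))}$, $M_{dh}(\Theta)=F(W_{dh},V_{dh})$ for matrices $W,V\in\mathbb{R}^{D\times H}$ in $\Theta$. For $\vec{s}\in\{0,1\}^H$: $h(d,\vec{s},\Theta)=\mathrm{argmax}_h\{M_{dh}(\Theta)s_h\}$, $\bar{W}_d=W_{d\,h(d,\vec{s},\Theta)}$, $\bar{V}_d=V_{d\,h(d,\vec{s},\Theta)}$, $\vec{\tilde{\eta}}_d(\vec{s},\Theta)=\vec{\Phi}(\bar{W}_d,\bar{V}_d)$.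 Model: $p(\vec{s}\mid\Theta)=\prod_h\pi_h^{s_h}(1-\pi_h)^{1-s_h}$, $p(\vec{y}\mid\vec{s},\Theta)=\prod_d p(y_d;\vec{\tilde{\eta}}_d(\vec{s},\Theta))$. Data $\vec{y}^{(1)},\dots,\vec{y}^{(N)}$, distributions $q^{(n)}$ on $\{0,1\}^H$, lower bound $\mathcal{F}(q,\Theta)=\sum_n\sum_{\vec{s}}q^{(n)}(\vec{s})\{\sum_d\log p(y_d^{(n)};\vec{\tilde{\eta}}_d(\vec{s},\Theta))+\sum_h\log p(s_h\mid\Theta)\}+\mathcal{H}(q)$ with $\mathcal{H}$ the entropy. $\mathcal{A}_{dh}(\vec{s},\Theta)=1$ if $h=h(d,\vec{s},\Theta)$ and $0$ otherwise; $\langle\cdot\rangle_{q^{(n)}}$ is expectation under $q^{(n)}$. *)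

theory Defs
  imports "HOL-Analysis.Analysis" "HOL-Probability.Probability"
begin

definition ef_integrand ::
  "(real \<Rightarrow> real) \<Rightarrow> (real \<Rightarrow> real) \<Rightarrow> (real \<Rightarrow> real) \<Rightarrow> real \<times> real \<Rightarrow> real \<Rightarrow> real" where
  "ef_integrand h T1 T2 eta y = h y * exp (fst eta * T1 y + snd eta * T2 y)"

definition ef_dom ::
  "real measure \<Rightarrow> (real \<Rightarrow> real) \<Rightarrow> (real \<Rightarrow> real) \<Rightarrow> (real \<Rightarrow> real) \<Rightarrow> (real \<times> real) set" where
  "ef_dom mu h T1 T2 = {eta. integrable mu (ef_integrand h T1 T2 eta)
                            \<and> (\<integral>y. ef_integrand h T1 T2 eta y \<partial>mu) > 0}"

definition ef_A ::
  "real measure \<Rightarrow> (real \<Rightarrow> real) \<Rightarrow> (real \<Rightarrow> real) \<Rightarrow> (real \<Rightarrow> real) \<Rightarrow> real \<times> real \<Rightarrow> real" where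
  "ef_A mu h T1 T2 eta = ln (\<integral>y. ef_integrand h T1 T2 eta y \<partial>mu)"

definition ef_p ::
  "real measure \<Rightarrow> (real \<Rightarrow> real) \<Rightarrow> (real \<Rightarrow> real) \<Rightarrow> (real \<Rightarrow> real) \<Rightarrow> real \<times> real \<Rightarrow> real \<Rightarrow> real" where
  "ef_p mu h T1 T2 eta y = h y * exp (fst eta * T1 y + snd eta * T2 y - ef_A mu h T1 T2 eta)"

definition ef_mean ::
  "real measure \<Rightarrow> (real \<Rightarrow> real) \<Rightarrow> (real \<Rightarrow> real) \<Rightarrow> (real \<Rightarrow> real) \<Rightarrow> real \<times> real \<Rightarrow> real \<times> real" where
  "ef_mean mu h T1 T2 eta =
     ((\<integral>y. T1 y * ef_p mu h T1 T2 eta y \<partial>mu), (\<integral>y. T2 y * ef_p mu h T1 T2 eta y \<partial>mu))"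

text \<open>Hidden states s in {0,1}^H are represented as subsets of {..<H} (s_h = 1 iff h in s).
  W, V are D x H matrices (indices d < D, h < H); pri are the prior parameters.\<close>

definition mca_F ::
  "real measure \<Rightarrow> (real \<Rightarrow> real) \<Rightarrow> (real \<Rightarrow> real) \<Rightarrow> (real \<Rightarrow> real)
   \<Rightarrow> (real \<times> real \<Rightarrow> real \<times> real) \<Rightarrow> real \<Rightarrow> real \<Rightarrow> real" where
  "mca_F mu h T1 T2 Phi w v = (\<integral>y. y * ef_p mu h T1 T2 (Phi (w, v)) y \<partial>mu)"

definition mca_M ::
  "real measure \<Rightarrow> (real \<Rightarrow> real) \<Rightarrow> (real \<Rightarrow> real) \<Rightarrow> (real \<Rightarrow> real)
   \<Rightarrow> (real \<times> real \<Rightarrow> real \<times> real) \<Rightarrow> (nat \<Rightarrow> nat \<Rightarrow> real) \<Rightarrow> (nat \<Rightarrow> nat \<Rightarrow> real)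
   \<Rightarrow> nat \<Rightarrow> nat \<Rightarrow> real" where
  "mca_M mu h T1 T2 Phi W V d k = mca_F mu h T1 T2 Phi (W d k) (V d k)"

text \<open>h(d, s, Theta) = argmax_h M_dh s_h (over h < H; ties broken by Hilbert choice).\<close>
definition mca_hsel ::
  "real measure \<Rightarrow> (real \<Rightarrow> real) \<Rightarrow> (real \<Rightarrow> real) \<Rightarrow> (real \<Rightarrow> real)
   \<Rightarrow> (real \<times> real \<Rightarrow> real \<times> real) \<Rightarrow> nat \<Rightarrow> (nat \<Rightarrow> nat \<Rightarrow> real) \<Rightarrow> (nat \<Rightarrow> nat \<Rightarrow> real)
   \<Rightarrow> nat \<Rightarrow> nat set \<Rightarrow> nat" where
  "mca_hsel mu h T1 T2 Phi H W V d s =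
     arg_max_on (\<lambda>k. mca_M mu h T1 T2 Phi W V d k * (if k \<in> s then 1 else 0)) {..<H}"

definition mca_Aind ::
  "real measure \<Rightarrow> (real \<Rightarrow> real) \<Rightarrow> (real \<Rightarrow> real) \<Rightarrow> (real \<Rightarrow> real)
   \<Rightarrow> (real \<times> real \<Rightarrow> real \<times> real) \<Rightarrow> nat \<Rightarrow> (nat \<Rightarrow> nat \<Rightarrow> real) \<Rightarrow> (nat \<Rightarrow> nat \<Rightarrow> real)
   \<Rightarrow> nat \<Rightarrow> nat \<Rightarrow> nat set \<Rightarrow> real" where
  "mca_Aind mu h T1 T2 Phi H W V d k s =
     (if k = mca_hsel mu h T1 T2 Phi H W V d s then 1 else 0)"

definition mca_expA ::
  "real measure \<Rightarrow> (real \<Rightarrow> real) \<Rightarrow> (real \<Rightarrow> real) \<Rightarrow> (real \<Rightarrow> real)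
   \<Rightarrow> (real \<times> real \<Rightarrow> real \<times> real) \<Rightarrow> nat \<Rightarrow> (nat \<Rightarrow> nat set \<Rightarrow> real)
   \<Rightarrow> (nat \<Rightarrow> nat \<Rightarrow> real) \<Rightarrow> (nat \<Rightarrow> nat \<Rightarrow> real) \<Rightarrow> nat \<Rightarrow> nat \<Rightarrow> nat \<Rightarrow> real" where
  "mca_expA mu h T1 T2 Phi H q W V n d k =
     (\<Sum>s\<in>Pow {..<H}. q n s * mca_Aind mu h T1 T2 Phi H W V d k s)"

definition mca_log_prior :: "nat \<Rightarrow> (nat \<Rightarrow> real) \<Rightarrow> nat set \<Rightarrow> real" where
  "mca_log_prior H pri s = (\<Sum>k<H. if k \<in> s then ln (pri k) else ln (1 - pri k))"

definition mca_entropy :: "nat \<Rightarrow> nat \<Rightarrow> (nat \<Rightarrow> nat set \<Rightarrow> real) \<Rightarrow> real" where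
  "mca_entropy N H q = - (\<Sum>n<N. \<Sum>s\<in>Pow {..<H}. q n s * ln (q n s))"

text \<open>Lower bound F(q, Theta) in which the assignment h(d,s,.) (i.e. A_dh) is evaluated at the
  reference parameters (W0, V0) while the likelihood terms use (W, V).  Derivatives are taken with A_dh held fixed at
  the current Theta, as in the paper's derivation of the M-step.\<close>
definition mca_lower_bound_frozen ::
  "real measure \<Rightarrow> (real \<Rightarrow> real) \<Rightarrow> (real \<Rightarrow> real) \<Rightarrow> (real \<Rightarrow> real)
   \<Rightarrow> (real \<times> real \<Rightarrow> real \<times> real) \<Rightarrow> nat \<Rightarrow> nat \<Rightarrow> nat
   \<Rightarrow> (nat \<Rightarrow> nat \<Rightarrow> real) \<Rightarrow> (nat \<Rightarrow> nat set \<Rightarrow> real)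
   \<Rightarrow> (nat \<Rightarrow> nat \<Rightarrow> real) \<Rightarrow> (nat \<Rightarrow> nat \<Rightarrow> real)
   \<Rightarrow> (nat \<Rightarrow> nat \<Rightarrow> real) \<Rightarrow> (nat \<Rightarrow> nat \<Rightarrow> real) \<Rightarrow> (nat \<Rightarrow> real) \<Rightarrow> real" where
  "mca_lower_bound_frozen mu h T1 T2 Phi D H N y q W0 V0 W V pri =
     (\<Sum>n<N. \<Sum>s\<in>Pow {..<H}. q n s *
        ((\<Sum>d<D. ln (ef_p mu h T1 T2
              (Phi (W d (mca_hsel mu h T1 T2 Phi H W0 V0 d s),
                    V d (mca_hsel mu h T1 T2 Phi H W0 V0 d s))) (y n d)))
         + mca_log_prior H pri s))
     + mca_entropy N H q"

definition mca_lower_bound ::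
  "real measure \<Rightarrow> (real \<Rightarrow> real) \<Rightarrow> (real \<Rightarrow> real) \<Rightarrow> (real \<Rightarrow> real)
   \<Rightarrow> (real \<times> real \<Rightarrow> real \<times> real) \<Rightarrow> nat \<Rightarrow> nat \<Rightarrow> nat
   \<Rightarrow> (nat \<Rightarrow> nat \<Rightarrow> real) \<Rightarrow> (nat \<Rightarrow> nat set \<Rightarrow> real)
   \<Rightarrow> (nat \<Rightarrow> nat \<Rightarrow> real) \<Rightarrow> (nat \<Rightarrow> nat \<Rightarrow> real) \<Rightarrow> (nat \<Rightarrow> real) \<Rightarrow> real" where
  "mca_lower_bound mu h T1 T2 Phi D H N y q W V pri =
     mca_lower_bound_frozen mu h T1 T2 Phi D H N y q W V W V pri"

end

theory Submission
  imports Defs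
begin

(*
  With the assignments A_dh frozen at the current parameters, the lower bound depends on (W_dh, V_dh)
  only through the weighted log-likelihood  sum_n <A_dh> log p(y_d^(n); eta)  at eta = Phi(W_dh, V_dh),
  plus a constant.  Its gradient in eta is  sum_n <A_dh> (T(y_d^(n)) - <T>_eta),  because the gradient
  of the log-partition function is the mean of T; differentiating under the integral is justified on
  the open natural domain, where T has exponential moments.  The derivative of the mean map is the
  covariance of T, which is injective: if Var(c.T) = 0 then c.T is almost surely constant, so moving
  eta along c leaves the mean unchanged, contradicting injectivity of the mean map.  By the inverse
  function theorem Phi is differentiable with invertible derivative, so the derivative of the lower
  bound vanishes iff the gradient above vanishes, where <T>_eta = (W_dh, V_dh); with T1(y) = y this
  is the stated formula.
*)

lemma one_plus_le_exp_scaled: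
  fixes d x :: real
  assumes "0 < d" "0 \<le> x"
  shows "1 + x \<le> (1 + 1 / d) * exp (d * x)"
proof -
  have "d * x \<le> exp (d * x)" using exp_ge_add_one_self[of "d * x"] by linarith
  then have "x \<le> exp (d * x) / d" using assms by (simp add: field_simps)
  moreover have "1 \<le> exp (d * x)" using assms by simp
  moreover have "(1 + 1 / d) * exp (d * x) = exp (d * x) + exp (d * x) / d"
    by (simp add: distrib_right)
  ultimately show ?thesis by linarith
qed

lemma power_one_plus_le_exp_scaled:
  fixes d x :: real
  assumes "0 < d" "0 \<le> x"
  shows "(1 + x) ^ k \<le> (1 + 1 / d) ^ k * exp (real k * d * x)"
proof -
  have "(1 + x) ^ k \<le> ((1 + 1 / d) * exp (d * x)) ^ k"
    using assms by (intro power_mono one_plus_le_exp_scaled) auto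
  also have "\<dots> = (1 + 1 / d) ^ k * exp (real k * d * x)"
    by (simp add: power_mult_distrib mult.assoc flip: exp_of_nat_mult)
  finally show ?thesis .
qed

lemma abs_exp_minus_one_minus_le: "\<bar>exp x - 1 - x\<bar> \<le> x\<^sup>2 * exp \<bar>x\<bar>" for x :: real
proof -
  obtain t where t: "\<bar>t\<bar> \<le> \<bar>x\<bar>" "exp x = (\<Sum>m<2. x ^ m / fact m) + exp t / fact 2 * x ^ 2"
    using Maclaurin_exp_le[of x 2] by blast
  then have "\<bar>exp x - 1 - x\<bar> = exp t / 2 * x\<^sup>2"
    by (simp add: numeral_2_eq_2)
  also have "\<dots> \<le> exp \<bar>x\<bar> * x\<^sup>2"
  proof (intro mult_right_mono)
    have "exp t \<le> exp \<bar>x\<bar>" using t(1) by (simp add: abs_le_iff)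
    then show "exp t / 2 \<le> exp \<bar>x\<bar>" using exp_gt_zero[of t] by linarith
  qed simp
  finally show ?thesis by (simp only: mult.commute)
qed

lemma abs_pair_inner_le:
  fixes v :: "real \<times> real"
  shows "\<bar>fst v * a + snd v * b\<bar> \<le> norm v * (\<bar>a\<bar> + \<bar>b\<bar>)"
proof -
  have "\<bar>fst v * a + snd v * b\<bar> \<le> \<bar>fst v\<bar> * \<bar>a\<bar> + \<bar>snd v\<bar> * \<bar>b\<bar>"
    by (metis abs_mult abs_triangle_ineq)
  also have "\<dots> \<le> norm v * \<bar>a\<bar> + norm v * \<bar>b\<bar>"
    using norm_fst_le[of "fst v" "snd v"] norm_snd_le[of "snd v" "fst v"]
    by (intro add_mono mult_right_mono) (auto simp: real_norm_def)
  finally show ?thesis by (simp add: distrib_left)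
qed

lemma has_derivative_at_quadratic_remainder:
  fixes f :: "'a::real_normed_vector \<Rightarrow> 'b::real_normed_vector"
  assumes "bounded_linear D" "0 < r"
    and remainder: "\<And>v. norm v < r \<Longrightarrow> norm (f (x + v) - f x - D v) \<le> C * (norm v)\<^sup>2"
  shows "(f has_derivative D) (at x)"
proof -
  have "(\<lambda>v. norm (f (x + v) - f x - D v) / norm v) \<midarrow>0\<rightarrow> 0"
  proof (rule Lim_null_comparison)
    show "\<forall>\<^sub>F v in at 0. norm (norm (f (x + v) - f x - D v) / norm v) \<le> C * norm v"
      unfolding eventually_at
    proof (intro exI[of _ r] conjI allI impI ballI assms(2))
      fix v :: 'a assume "v \<noteq> 0 \<and> dist v 0 < r"
      then have "norm (f (x + v) - f x - D v) / norm v \<le> C * (norm v)\<^sup>2 / norm v"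
        using remainder[of v] by (intro divide_right_mono) auto
      also have "\<dots> = C * norm v" by (simp add: power2_eq_square)
      finally show "norm (norm (f (x + v) - f x - D v) / norm v) \<le> C * norm v" by simp
    qed
    show "((\<lambda>v. C * norm v) \<longlongrightarrow> 0) (at 0)"
      by (intro tendsto_mult_right_zero tendsto_norm_zero tendsto_ident_at)
  qed
  then show ?thesis unfolding has_derivative_at using assms(1) by blast
qed

lemma pair_linear_form_eq_0_iff:
  "(\<lambda>u :: real \<times> real. fst u * a + snd u * b) = (\<lambda>_. 0) \<longleftrightarrow> a = 0 \<and> b = 0"
proof
  assume "(\<lambda>u :: real \<times> real. fst u * a + snd u * b) = (\<lambda>_. 0)"
  from fun_cong[OF this, of "(1, 0)"] fun_cong[OF this, of "(0, 1)"] show "a = 0 \<and> b = 0"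
    by simp
qed simp

lemma sum_weighted_deviation_eq_0_iff:
  fixes a x :: "'i \<Rightarrow> real"
  assumes "(\<Sum>n\<in>I. a n) \<noteq> 0"
  shows "(\<Sum>n\<in>I. a n * (x n - w)) = 0 \<longleftrightarrow> w = (\<Sum>n\<in>I. a n * x n) / (\<Sum>n\<in>I. a n)"
  using assms by (simp add: right_diff_distrib sum_subtractf flip: sum_distrib_right) (auto simp: field_simps)

lemma has_derivative_comp_inverse_eq_0_iff:
  fixes f :: "'a::euclidean_space \<Rightarrow> 'a" and K :: "'a \<Rightarrow> 'b::real_normed_vector"
  assumes S: "open S" "x \<in> S" and cont: "continuous_on S f" and inv: "\<And>z. z \<in> S \<Longrightarrow> g (f z) = z"
    and f': "(f has_derivative f') (at x)" "inj f'"
    and K': "(K has_derivative K') (at x)"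
  shows "((K \<circ> g) has_derivative (\<lambda>_. 0)) (at (f x)) \<longleftrightarrow> K' = (\<lambda>_. 0)"
proof -
  have "linear f'" using f'(1) has_derivative_linear by blast
  then obtain g' where g': "\<And>u. g' (f' u) = u" "\<And>u. f' (g' u) = u"
    using linear_injective_isomorphism[OF _ f'(2)] by auto
  have "(g has_derivative g') (at (f x))"
    using has_derivative_inverse_strong[OF S cont inv f'(1)] g'(2) by (simp add: fun_eq_iff)
  then have chain: "((K \<circ> g) has_derivative (K' \<circ> g')) (at (f x))"
    using diff_chain_at K' inv[OF S(2)] by fastforce
  show ?thesis
  proof
    assume "((K \<circ> g) has_derivative (\<lambda>_. 0)) (at (f x))"
    then have "K' (g' v) = 0" for v
      using has_derivative_unique[OF chain] by (metis comp_apply)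
    then show "K' = (\<lambda>_. 0)" by (metis g'(1))
  qed (use chain in \<open>simp add: comp_def\<close>)
qed

lemma ln_ef_p:
  "h z > 0 \<Longrightarrow>
     ln (ef_p mu h T1 T2 eta z) = ln (h z) + fst eta * T1 z + snd eta * T2 z - ef_A mu h T1 T2 eta"
  by (simp add: ef_p_def ln_mult)

locale exp_family =
  fixes mu :: "real measure" and h T1 T2 :: "real \<Rightarrow> real"
  assumes h_meas: "h \<in> borel_measurable borel" and h_nonneg: "\<And>y. h y \<ge> 0"
    and T1_meas: "T1 \<in> borel_measurable borel" and T2_meas: "T2 \<in> borel_measurable borel"
    and sets_mu: "sets mu = sets borel"
    and open_dom: "open (ef_dom mu h T1 T2)"
begin

abbreviation dens :: "real \<times> real \<Rightarrow> real \<Rightarrow> real" where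
  "dens \<equiv> ef_integrand h T1 T2"

abbreviation param_dom :: "(real \<times> real) set" where
  "param_dom \<equiv> ef_dom mu h T1 T2"

abbreviation stat_norm :: "real \<Rightarrow> real" where
  "stat_norm y \<equiv> \<bar>T1 y\<bar> + \<bar>T2 y\<bar>"

definition moment :: "(real \<Rightarrow> real) \<Rightarrow> real \<times> real \<Rightarrow> real" where
  "moment g eta = (\<integral>y. g y * dens eta y \<partial>mu)"

definition partition :: "real \<times> real \<Rightarrow> real" where
  "partition = moment (\<lambda>_. 1)"

lemma borel_measurable_mu: "f \<in> borel_measurable borel \<Longrightarrow> f \<in> borel_measurable mu"
  using measurable_cong_sets[OF sets_mu refl] by blast

lemma T1_measurable [measurable]: "T1 \<in> borel_measurable mu"
  and T2_measurable [measurable]: "T2 \<in> borel_measurable mu"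
  and dens_measurable [measurable]: "dens eta \<in> borel_measurable mu"
  using h_meas T1_meas T2_meas unfolding ef_integrand_def
  by (auto intro!: borel_measurable_mu)

lemma dens_nonneg: "dens eta y \<ge> 0"
  unfolding ef_integrand_def using h_nonneg by simp

lemma dens_shift: "dens (eta + v) y = dens eta y * exp (fst v * T1 y + snd v * T2 y)"
  unfolding ef_integrand_def by (simp add: algebra_simps flip: exp_add)

lemma integrable_dens_param_dom: "eta \<in> param_dom \<Longrightarrow> integrable mu (dens eta)"
  by (simp add: ef_dom_def)

lemma integrable_exp_stat_norm:
  assumes "eta \<in> param_dom"
  obtains \<delta> where "\<delta> > 0" "integrable mu (\<lambda>y. exp (\<delta> * stat_norm y) * dens eta y)"
proof -
  obtain r where r: "r > 0" "ball eta r \<subseteq> param_dom"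
    using open_dom assms open_contains_ball by blast
  define \<delta> where "\<delta> = r / 3"
  define corners :: "(real \<times> real) set" where "corners = {-1, 1} \<times> {-1, 1}"
  have "integrable mu (dens (eta + \<delta> *\<^sub>R s))" if "s \<in> corners" for s
  proof -
    have "dist eta (eta + \<delta> *\<^sub>R s) = norm (\<delta> * fst s, \<delta> * snd s)"
      by (cases s) (simp add: dist_norm norm_Pair)
    also have "\<dots> \<le> \<bar>\<delta> * fst s\<bar> + \<bar>\<delta> * snd s\<bar>"
      using norm_Pair_le[of "\<delta> * fst s" "\<delta> * snd s"] by simp
    also have "\<dots> < r" using that r by (auto simp: corners_def \<delta>_def)
    finally have "eta + \<delta> *\<^sub>R s \<in> ball eta r" by simp
    then show ?thesis using r integrable_dens_param_dom by blast
  qed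
  then have int_sum: "integrable mu (\<lambda>y. \<Sum>s\<in>corners. dens (eta + \<delta> *\<^sub>R s) y)"
    by auto
  have "integrable mu (\<lambda>y. exp (\<delta> * stat_norm y) * dens eta y)"
  proof (rule Bochner_Integration.integrable_bound[OF int_sum], measurable, intro AE_I2)
    fix y
    \<comment> \<open>the corner in the direction of the signs of T y realises the exponent \<delta> * stat_norm y\<close>
    define s :: "real \<times> real" where "s = (if T1 y \<ge> 0 then 1 else -1, if T2 y \<ge> 0 then 1 else -1)"
    have "exp (\<delta> * stat_norm y) * dens eta y = dens (eta + \<delta> *\<^sub>R s) y"
      unfolding dens_shift by (simp add: s_def algebra_simps)
    also have "\<dots> \<le> (\<Sum>s\<in>corners. dens (eta + \<delta> *\<^sub>R s) y)"
      by (rule member_le_sum) (auto simp: s_def corners_def dens_nonneg)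
    finally show "norm (exp (\<delta> * stat_norm y) * dens eta y)
        \<le> norm (\<Sum>s\<in>corners. dens (eta + \<delta> *\<^sub>R s) y)"
      using dens_nonneg by (simp add: sum_nonneg)
  qed
  moreover have "\<delta> > 0" using r by (simp add: \<delta>_def)
  ultimately show ?thesis using that by blast
qed

lemma integrable_dominated:
  assumes "integrable mu (\<lambda>y. b y * dens eta y)" "g \<in> borel_measurable mu"
    and "\<And>y. \<bar>g y\<bar> \<le> C * b y"
  shows "integrable mu (\<lambda>y. g y * dens eta y)"
proof (rule Bochner_Integration.integrable_bound)
  show "integrable mu (\<lambda>y. C * (b y * dens eta y))" using assms(1) by simp
  show "AE y in mu. norm (g y * dens eta y) \<le> norm (C * (b y * dens eta y))"
  proof (intro AE_I2)
    fix y
    have "norm (g y * dens eta y) = \<bar>g y\<bar> * dens eta y"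
      using dens_nonneg[of eta y] by (simp add: abs_mult)
    also have "\<dots> \<le> C * (b y * dens eta y)"
      using mult_right_mono[OF assms(3) dens_nonneg] by (simp add: mult.assoc)
    also have "\<dots> \<le> norm (C * (b y * dens eta y))" by simp
    finally show "norm (g y * dens eta y) \<le> norm (C * (b y * dens eta y))" .
  qed
qed (use assms(2) in measurable)

lemma integrable_poly_exp_stat_norm:
  assumes "eta \<in> param_dom"
  obtains \<delta> where "\<delta> > 0"
    "\<And>k. integrable mu (\<lambda>y. ((1 + stat_norm y) ^ k * exp (\<delta> * stat_norm y)) * dens eta y)"
proof -
  obtain \<delta>' where "\<delta>' > 0" and int': "integrable mu (\<lambda>y. exp (\<delta>' * stat_norm y) * dens eta y)"
    using integrable_exp_stat_norm[OF assms] by blast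
  define \<delta> where "\<delta> = \<delta>' / 2"
  have \<delta>: "\<delta> > 0" using \<open>\<delta>' > 0\<close> by (simp add: \<delta>_def)
  have int: "integrable mu (\<lambda>y. exp (2 * \<delta> * stat_norm y) * dens eta y)"
    using int' by (simp add: \<delta>_def)
  have "integrable mu (\<lambda>y. ((1 + stat_norm y) ^ k * exp (\<delta> * stat_norm y)) * dens eta y)" for k
  proof (rule integrable_dominated[OF int])
    define c where "c = \<delta> / (k + 1)"
    have c: "c > 0" "real k * c \<le> \<delta>" using \<delta> by (auto simp: c_def field_simps)
    fix y
    have "(1 + stat_norm y) ^ k \<le> (1 + 1 / c) ^ k * exp (real k * c * stat_norm y)"
      using c by (intro power_one_plus_le_exp_scaled) auto
    also have "\<dots> \<le> (1 + 1 / c) ^ k * exp (\<delta> * stat_norm y)"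
      using c mult_right_mono[OF c(2), of "stat_norm y"] by (intro mult_left_mono) auto
    finally have "(1 + stat_norm y) ^ k * exp (\<delta> * stat_norm y)
        \<le> (1 + 1 / c) ^ k * exp (\<delta> * stat_norm y) * exp (\<delta> * stat_norm y)"
      by (rule mult_right_mono) simp
    then show "\<bar>(1 + stat_norm y) ^ k * exp (\<delta> * stat_norm y)\<bar>
        \<le> (1 + 1 / c) ^ k * exp (2 * \<delta> * stat_norm y)"
      by (simp add: mult.assoc flip: exp_add)
  qed measurable
  then show ?thesis using that \<delta> by blast
qed

lemma integrable_poly_moment:
  assumes "eta \<in> param_dom" "g \<in> borel_measurable mu" "\<And>y. \<bar>g y\<bar> \<le> C * (1 + stat_norm y) ^ k"
  shows "integrable mu (\<lambda>y. g y * dens eta y)"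
proof -
  obtain \<delta> where "\<delta> > 0"
    and int: "integrable mu (\<lambda>y. ((1 + stat_norm y) ^ k * exp (\<delta> * stat_norm y)) * dens eta y)"
    using integrable_poly_exp_stat_norm[OF assms(1)] by blast
  show ?thesis
  proof (rule integrable_dominated[OF int assms(2)])
    fix y
    have pos: "(1 + stat_norm y) ^ k > 0" by (simp add: add_pos_nonneg)
    moreover have "0 \<le> C * (1 + stat_norm y) ^ k"
      using assms(3)[of y] abs_ge_zero[of "g y"] by linarith
    ultimately have "C \<ge> 0" by (metis not_le zero_le_mult_iff)
    moreover have "(1 + stat_norm y) ^ k \<le> (1 + stat_norm y) ^ k * exp (\<delta> * stat_norm y)"
      using pos \<open>\<delta> > 0\<close> by simp
    ultimately have "C * (1 + stat_norm y) ^ k \<le> C * ((1 + stat_norm y) ^ k * exp (\<delta> * stat_norm y))"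
      by (rule mult_left_mono[rotated])
    then show "\<bar>g y\<bar> \<le> C * ((1 + stat_norm y) ^ k * exp (\<delta> * stat_norm y))"
      using assms(3)[of y] by linarith
  qed
qed

lemma exp_pair_inner_remainder_le:
  "\<bar>exp (fst v * T1 y + snd v * T2 y) - 1 - (fst v * T1 y + snd v * T2 y)\<bar>
     \<le> (norm v)\<^sup>2 * ((1 + stat_norm y)\<^sup>2 * exp (norm v * stat_norm y))"
proof -
  let ?x = "fst v * T1 y + snd v * T2 y"
  have x: "\<bar>?x\<bar> \<le> norm v * stat_norm y" by (rule abs_pair_inner_le)
  also have "\<dots> \<le> norm v * (1 + stat_norm y)" by (simp add: mult_left_mono)
  finally have "?x\<^sup>2 \<le> (norm v * (1 + stat_norm y))\<^sup>2"
    by (metis abs_ge_zero power2_abs power_mono)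
  moreover have "exp \<bar>?x\<bar> \<le> exp (norm v * stat_norm y)" using x by simp
  ultimately have "?x\<^sup>2 * exp \<bar>?x\<bar> \<le> (norm v * (1 + stat_norm y))\<^sup>2 * exp (norm v * stat_norm y)"
    by (intro mult_mono) auto
  then show ?thesis
    using abs_exp_minus_one_minus_le[of ?x] by (simp add: power_mult_distrib mult.assoc)
qed

lemma moment_shift:
  "moment g (eta + v) = (\<integral>y. (g y * exp (fst v * T1 y + snd v * T2 y)) * dens eta y \<partial>mu)"
  unfolding moment_def dens_shift by (simp add: ac_simps)

lemma integrable_moment_mult_stat:
  assumes eta: "eta \<in> param_dom" and [measurable]: "g \<in> borel_measurable mu" "T \<in> borel_measurable mu"
    and g_bound: "\<And>y. \<bar>g y\<bar> \<le> C * (1 + stat_norm y) ^ k"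
    and T_bound: "\<And>y. \<bar>T y\<bar> \<le> stat_norm y"
  shows "integrable mu (\<lambda>y. (g y * T y) * dens eta y)"
proof (rule integrable_poly_moment[OF eta, of _ C "Suc k"])
  show "(\<lambda>y. g y * T y) \<in> borel_measurable mu" by measurable
  fix y
  have "\<bar>g y\<bar> * \<bar>T y\<bar> \<le> (C * (1 + stat_norm y) ^ k) * (1 + stat_norm y)"
    using g_bound[of y] T_bound[of y] by (intro mult_mono) auto
  then show "\<bar>g y * T y\<bar> \<le> C * (1 + stat_norm y) ^ Suc k" by (simp add: abs_mult ac_simps)
qed

lemma integrable_moment_exp_shift:
  assumes int: "integrable mu (\<lambda>y. ((1 + stat_norm y) ^ k * exp (\<delta> * stat_norm y)) * dens eta y)"
    and [measurable]: "g \<in> borel_measurable mu" and g_bound: "\<And>y. \<bar>g y\<bar> \<le> C * (1 + stat_norm y) ^ k"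
    and v: "norm v \<le> \<delta>"
  shows "integrable mu (\<lambda>y. (g y * exp (fst v * T1 y + snd v * T2 y)) * dens eta y)"
proof (rule integrable_dominated[OF int], measurable)
  fix y
  have "exp (fst v * T1 y + snd v * T2 y) \<le> exp (\<delta> * stat_norm y)"
    using abs_pair_inner_le[of v "T1 y" "T2 y"] mult_right_mono[OF v, of "stat_norm y"] by simp
  then have "\<bar>g y\<bar> * exp (fst v * T1 y + snd v * T2 y)
      \<le> C * (1 + stat_norm y) ^ k * exp (\<delta> * stat_norm y)"
    using order_trans[OF abs_ge_zero g_bound] by (intro mult_mono g_bound) auto
  then show "\<bar>g y * exp (fst v * T1 y + snd v * T2 y)\<bar>
      \<le> C * ((1 + stat_norm y) ^ k * exp (\<delta> * stat_norm y))"
    by (simp add: abs_mult mult.assoc)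
qed

lemma moment_remainder_integrand_le:
  assumes g_bound: "\<And>y. \<bar>g y\<bar> \<le> C * (1 + stat_norm y) ^ k" and v: "norm v \<le> \<delta>"
  shows "\<bar>(g y * dens eta y) * (exp (fst v * T1 y + snd v * T2 y) - 1 - (fst v * T1 y + snd v * T2 y))\<bar>
    \<le> (norm v)\<^sup>2 * (C * (((1 + stat_norm y) ^ (k + 2) * exp (\<delta> * stat_norm y)) * dens eta y))"
proof -
  let ?x = "fst v * T1 y + snd v * T2 y"
  have "\<bar>exp ?x - 1 - ?x\<bar> \<le> (norm v)\<^sup>2 * ((1 + stat_norm y)\<^sup>2 * exp (\<delta> * stat_norm y))"
    using exp_pair_inner_remainder_le[of v y] mult_right_mono[OF v, of "stat_norm y"]
    by (smt (verit) exp_le_cancel_iff mult_left_mono zero_le_power2 abs_ge_zero)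
  then have "\<bar>g y\<bar> * \<bar>exp ?x - 1 - ?x\<bar>
      \<le> C * (1 + stat_norm y) ^ k * ((norm v)\<^sup>2 * ((1 + stat_norm y)\<^sup>2 * exp (\<delta> * stat_norm y)))"
    using g_bound[of y] order_trans[OF abs_ge_zero g_bound] by (intro mult_mono) auto
  from mult_right_mono[OF this dens_nonneg[of eta y]] show ?thesis
    using dens_nonneg[of eta y] by (simp add: abs_mult power_add power2_eq_square mult_ac)
qed

lemma moment_has_derivative:
  assumes eta: "eta \<in> param_dom" and g [measurable]: "g \<in> borel_measurable mu"
    and g_bound: "\<And>y. \<bar>g y\<bar> \<le> C * (1 + stat_norm y) ^ k"
  shows "(moment g has_derivative
           (\<lambda>u. fst u * moment (\<lambda>y. g y * T1 y) eta + snd u * moment (\<lambda>y. g y * T2 y) eta)) (at eta)"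
    (is "(_ has_derivative ?D) _")
proof -
  let ?x = "\<lambda>v y. fst v * T1 y + snd v * T2 y"
  obtain \<delta> where "\<delta> > 0"
    and int_w: "\<And>j. integrable mu (\<lambda>y. ((1 + stat_norm y) ^ j * exp (\<delta> * stat_norm y)) * dens eta y)"
    using integrable_poly_exp_stat_norm[OF eta] by blast
  have int: "integrable mu (\<lambda>y. g y * dens eta y)"
    "integrable mu (\<lambda>y. (g y * T1 y) * dens eta y)" "integrable mu (\<lambda>y. (g y * T2 y) * dens eta y)"
    using integrable_poly_moment[OF eta g g_bound]
      integrable_moment_mult_stat[OF eta g T1_measurable g_bound]
      integrable_moment_mult_stat[OF eta g T2_measurable g_bound] by auto
  show ?thesis
  proof (rule has_derivative_at_quadratic_remainder)
    show "bounded_linear ?D"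
      by (intro bounded_linear_add bounded_linear_compose[OF bounded_linear_mult_left bounded_linear_fst]
          bounded_linear_compose[OF bounded_linear_mult_left bounded_linear_snd])
    fix v :: "real \<times> real" assume v: "norm v < \<delta>"
    let ?r = "\<lambda>y. (g y * dens eta y) * (exp (?x v y) - 1 - ?x v y)"
    let ?b = "\<lambda>y. C * (((1 + stat_norm y) ^ (k + 2) * exp (\<delta> * stat_norm y)) * dens eta y)"
    have "?r = (\<lambda>y. (g y * exp (?x v y)) * dens eta y - g y * dens eta y
        - (fst v * ((g y * T1 y) * dens eta y) + snd v * ((g y * T2 y) * dens eta y)))"
      by (simp add: fun_eq_iff algebra_simps)
    moreover have "integrable mu (\<lambda>y. (g y * exp (?x v y)) * dens eta y)"
      using v by (intro integrable_moment_exp_shift[OF int_w g g_bound]) simp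
    ultimately have r: "integrable mu ?r"
      "moment g (eta + v) - moment g eta - ?D v = (\<integral>y. ?r y \<partial>mu)"
      using int unfolding moment_shift by (simp_all add: moment_def)
    have "norm (\<integral>y. ?r y \<partial>mu) \<le> (\<integral>y. (norm v)\<^sup>2 * ?b y \<partial>mu)"
      using r(1) int_w[of "k + 2"] moment_remainder_integrand_le[OF g_bound, of v \<delta>] v
      by (intro Bochner_Integration.integral_norm_bound_integral) auto
    then show "norm (moment g (eta + v) - moment g eta - ?D v) \<le> (\<integral>y. ?b y \<partial>mu) * (norm v)\<^sup>2"
      unfolding r(2) by (simp add: mult.commute)
  qed fact
qed

lemma partition_pos: "eta \<in> param_dom \<Longrightarrow> partition eta > 0"
  by (simp add: partition_def moment_def ef_dom_def)

lemma ef_A_eq: "ef_A mu h T1 T2 eta = ln (partition eta)"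
  by (simp add: ef_A_def partition_def moment_def)

lemma ef_p_eq: "eta \<in> param_dom \<Longrightarrow> ef_p mu h T1 T2 eta y = dens eta y / partition eta"
  using partition_pos[of eta] by (simp add: ef_p_def ef_A_eq ef_integrand_def exp_diff)

lemma ef_mean_eq:
  "eta \<in> param_dom \<Longrightarrow>
     ef_mean mu h T1 T2 eta = (moment T1 eta / partition eta, moment T2 eta / partition eta)"
  by (simp add: ef_mean_def ef_p_eq moment_def)

lemma partition_has_derivative:
  "eta \<in> param_dom \<Longrightarrow>
     (partition has_derivative (\<lambda>u. fst u * moment T1 eta + snd u * moment T2 eta)) (at eta)"
  using moment_has_derivative[of eta "\<lambda>_. 1" 1 0] by (simp add: partition_def)

lemma moment_T1_has_derivative:
  "eta \<in> param_dom \<Longrightarrow> (moment T1 has_derivative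
     (\<lambda>u. fst u * moment (\<lambda>y. T1 y * T1 y) eta + snd u * moment (\<lambda>y. T1 y * T2 y) eta)) (at eta)"
  using moment_has_derivative[of eta T1 1 1] by simp

lemma moment_T2_has_derivative:
  "eta \<in> param_dom \<Longrightarrow> (moment T2 has_derivative
     (\<lambda>u. fst u * moment (\<lambda>y. T2 y * T1 y) eta + snd u * moment (\<lambda>y. T2 y * T2 y) eta)) (at eta)"
  using moment_has_derivative[of eta T2 1 1] by simp

(* Quotient rule for (moment T1 / partition, moment T2 / partition); the i-th component is the
   covariance of T_i and u.T under p(y; eta). *)
definition mean_derivative :: "real \<times> real \<Rightarrow> real \<times> real \<Rightarrow> real \<times> real" where
  "mean_derivative eta u =
     (((fst u * moment (\<lambda>y. T1 y * T1 y) eta + snd u * moment (\<lambda>y. T1 y * T2 y) eta) * partition eta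
        - moment T1 eta * (fst u * moment T1 eta + snd u * moment T2 eta)) / (partition eta * partition eta),
      ((fst u * moment (\<lambda>y. T2 y * T1 y) eta + snd u * moment (\<lambda>y. T2 y * T2 y) eta) * partition eta
        - moment T2 eta * (fst u * moment T1 eta + snd u * moment T2 eta)) / (partition eta * partition eta))"

lemma ef_mean_has_derivative:
  assumes eta: "eta \<in> param_dom"
  shows "(ef_mean mu h T1 T2 has_derivative mean_derivative eta) (at eta)"
proof -
  have "((\<lambda>x. (moment T1 x / partition x, moment T2 x / partition x)) has_derivative mean_derivative eta) (at eta)"
    unfolding mean_derivative_def using partition_pos[OF eta]
    by (intro has_derivative_Pair has_derivative_divide' moment_T1_has_derivative
        moment_T2_has_derivative partition_has_derivative eta) auto
  then show ?thesis
    by (rule has_derivative_transform_within_open[OF _ open_dom eta]) (simp add: ef_mean_eq)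
qed

lemma continuous_on_ef_mean: "continuous_on param_dom (ef_mean mu h T1 T2)"
  by (rule has_derivative_continuous_on) (auto intro: has_derivative_at_withinI ef_mean_has_derivative)

lemma integrable_stat_moments:
  assumes eta: "eta \<in> param_dom"
  shows "integrable mu (dens eta)"
    and "integrable mu (\<lambda>y. T1 y * dens eta y)" "integrable mu (\<lambda>y. T2 y * dens eta y)"
    and "integrable mu (\<lambda>y. T1 y * T1 y * dens eta y)" "integrable mu (\<lambda>y. T1 y * T2 y * dens eta y)"
    and "integrable mu (\<lambda>y. T2 y * T1 y * dens eta y)" "integrable mu (\<lambda>y. T2 y * T2 y * dens eta y)"
proof -
  have T_le: "\<bar>T1 y\<bar> \<le> stat_norm y" "\<bar>T2 y\<bar> \<le> stat_norm y" for y
    by auto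
  have T_bound: "\<bar>T1 y\<bar> \<le> 1 * (1 + stat_norm y) ^ 1" "\<bar>T2 y\<bar> \<le> 1 * (1 + stat_norm y) ^ 1" for y
    by auto
  note int_T = integrable_moment_mult_stat[OF eta _ _ T_bound(1) T_le(1)]
    integrable_moment_mult_stat[OF eta _ _ T_bound(1) T_le(2)]
    integrable_moment_mult_stat[OF eta _ _ T_bound(2) T_le(1)]
    integrable_moment_mult_stat[OF eta _ _ T_bound(2) T_le(2)]
  show "integrable mu (dens eta)"
    using eta by (rule integrable_dens_param_dom)
  show "integrable mu (\<lambda>y. T1 y * dens eta y)" "integrable mu (\<lambda>y. T2 y * dens eta y)"
    using integrable_poly_moment[OF eta T1_measurable T_bound(1)]
      integrable_poly_moment[OF eta T2_measurable T_bound(2)] .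
  show "integrable mu (\<lambda>y. T1 y * T1 y * dens eta y)" "integrable mu (\<lambda>y. T1 y * T2 y * dens eta y)"
    "integrable mu (\<lambda>y. T2 y * T1 y * dens eta y)" "integrable mu (\<lambda>y. T2 y * T2 y * dens eta y)"
    using int_T by simp_all
qed

lemma has_bochner_integral_variance:
  assumes eta: "eta \<in> param_dom"
  shows "has_bochner_integral mu (\<lambda>y. (fst c * T1 y + snd c * T2 y - m)\<^sup>2 * dens eta y)
    (fst c * (fst c * moment (\<lambda>y. T1 y * T1 y) eta + snd c * moment (\<lambda>y. T1 y * T2 y) eta)
      + snd c * (fst c * moment (\<lambda>y. T2 y * T1 y) eta + snd c * moment (\<lambda>y. T2 y * T2 y) eta)
      - 2 * m * (fst c * moment T1 eta + snd c * moment T2 eta) + m\<^sup>2 * partition eta)"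
proof -
  have "(\<lambda>y. (fst c * T1 y + snd c * T2 y - m)\<^sup>2 * dens eta y) = (\<lambda>y.
      fst c * (fst c * (T1 y * T1 y * dens eta y) + snd c * (T1 y * T2 y * dens eta y))
      + snd c * (fst c * (T2 y * T1 y * dens eta y) + snd c * (T2 y * T2 y * dens eta y))
      - 2 * m * (fst c * (T1 y * dens eta y) + snd c * (T2 y * dens eta y)) + m\<^sup>2 * dens eta y)"
    by (simp add: fun_eq_iff power2_eq_square algebra_simps)
  moreover note integrable_stat_moments[OF eta, THEN has_bochner_integral_integrable]
  ultimately show ?thesis
    unfolding moment_def partition_def
    by (simp only:) (intro has_bochner_integral_add has_bochner_integral_diff
        has_bochner_integral_mult_right; simp)
qed

lemma mean_derivative_eq_0_imp_AE_const:
  assumes eta: "eta \<in> param_dom" and zero: "mean_derivative eta c = 0"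
  defines "m \<equiv> (fst c * moment T1 eta + snd c * moment T2 eta) / partition eta"
  shows "AE y in mu. dens eta y = 0 \<or> fst c * T1 y + snd c * T2 y = m"
proof -
  let ?f = "\<lambda>y. (fst c * T1 y + snd c * T2 y - m)\<^sup>2 * dens eta y"
  have Z: "partition eta > 0" using partition_pos[OF eta] .
  have mZ: "m * partition eta = fst c * moment T1 eta + snd c * moment T2 eta"
    using Z by (simp add: m_def)
  have "fst c * moment (\<lambda>y. T1 y * T1 y) eta + snd c * moment (\<lambda>y. T1 y * T2 y) eta = moment T1 eta * m"
    and "fst c * moment (\<lambda>y. T2 y * T1 y) eta + snd c * moment (\<lambda>y. T2 y * T2 y) eta = moment T2 eta * m"
    using zero Z by (auto simp: mean_derivative_def zero_prod_def m_def field_simps)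
  then have "integral\<^sup>L mu ?f
      = m * (fst c * moment T1 eta + snd c * moment T2 eta) - 2 * m * (fst c * moment T1 eta + snd c * moment T2 eta)
        + m * (m * partition eta)"
    using has_bochner_integral_variance[OF eta, of c m]
    by (simp add: has_bochner_integral_iff power2_eq_square algebra_simps)
  also have "\<dots> = 0"
    unfolding mZ by (simp add: algebra_simps)
  finally have "integral\<^sup>L mu ?f = 0" .
  moreover have "integrable mu ?f"
    using has_bochner_integral_variance[OF eta, of c m] by (rule integrable.intros)
  ultimately have "AE y in mu. ?f y = 0"
    by (subst integral_nonneg_eq_0_iff_AE[symmetric]) (auto simp: dens_nonneg)
  then show ?thesis by eventually_elim auto
qed

lemma moment_shift_AE_const:
  assumes [measurable]: "g \<in> borel_measurable mu"
    and "AE y in mu. dens eta y = 0 \<or> fst c * T1 y + snd c * T2 y = m"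
  shows "moment g (eta + c) = exp m * moment g eta"
proof -
  have "moment g (eta + c) = (\<integral>y. exp m * (g y * dens eta y) \<partial>mu)"
    unfolding moment_def dens_shift
    by (rule integral_cong_AE) (use assms(2) in \<open>auto elim!: AE_mp\<close>)
  then show ?thesis by (simp add: moment_def)
qed

lemma ef_mean_shift_AE_const:
  assumes "eta \<in> param_dom" "eta + c \<in> param_dom"
    and "AE y in mu. dens eta y = 0 \<or> fst c * T1 y + snd c * T2 y = m"
  shows "ef_mean mu h T1 T2 (eta + c) = ef_mean mu h T1 T2 eta"
  using assms by (simp add: ef_mean_eq partition_def moment_shift_AE_const[OF _ assms(3)])

lemma inj_mean_derivative:
  assumes inj: "inj_on (ef_mean mu h T1 T2) param_dom" and eta: "eta \<in> param_dom"
  shows "inj (mean_derivative eta)"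
proof -
  have lin: "linear (mean_derivative eta)"
    using ef_mean_has_derivative[OF eta] has_derivative_linear by blast
  have "c = 0" if zero: "mean_derivative eta c = 0" for c
  proof (rule ccontr)
    assume "c \<noteq> 0"
    obtain r where r: "r > 0" "ball eta r \<subseteq> param_dom"
      using open_dom eta open_contains_ball by blast
    define t where "t = r / (2 * norm c)"
    have "t > 0" using r \<open>c \<noteq> 0\<close> by (simp add: t_def)
    have "dist eta (eta + t *\<^sub>R c) < r"
      using r \<open>c \<noteq> 0\<close> \<open>t > 0\<close> by (simp add: dist_norm t_def)
    then have eta_t: "eta + t *\<^sub>R c \<in> param_dom" using r by auto
    have "mean_derivative eta (t *\<^sub>R c) = 0"
      using zero linear_scale[OF lin] by simp
    from ef_mean_shift_AE_const[OF eta eta_t mean_derivative_eq_0_imp_AE_const[OF eta this]]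
    have "eta + t *\<^sub>R c = eta" using inj eta eta_t by (auto dest: inj_onD)
    then show False using \<open>t > 0\<close> \<open>c \<noteq> 0\<close> by simp
  qed
  then show ?thesis using lin by (simp add: linear_injective_0)
qed

lemma weighted_log_likelihood_has_derivative:
  assumes eta: "eta \<in> param_dom" and z_pos: "\<And>n. n \<in> I \<Longrightarrow> h (z n) > 0"
  shows "((\<lambda>eta. \<Sum>n\<in>I. a n * ln (ef_p mu h T1 T2 eta (z n))) has_derivative
    (\<lambda>u. fst u * (\<Sum>n\<in>I. a n * (T1 (z n) - fst (ef_mean mu h T1 T2 eta)))
         + snd u * (\<Sum>n\<in>I. a n * (T2 (z n) - snd (ef_mean mu h T1 T2 eta))))) (at eta)"
proof -
  have "(\<lambda>eta. \<Sum>n\<in>I. a n * ln (ef_p mu h T1 T2 eta (z n)))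
      = (\<lambda>eta. \<Sum>n\<in>I. a n * (ln (h (z n)) + fst eta * T1 (z n) + snd eta * T2 (z n) - ln (partition eta)))"
    using z_pos by (simp add: ln_ef_p ef_A_eq)
  moreover have "((\<lambda>eta. \<Sum>n\<in>I. a n * (ln (h (z n)) + fst eta * T1 (z n) + snd eta * T2 (z n)
      - ln (partition eta))) has_derivative (\<lambda>u. \<Sum>n\<in>I. a n * (0 + fst u * T1 (z n) + snd u * T2 (z n)
         - (fst u * moment T1 eta + snd u * moment T2 eta) * inverse (partition eta)))) (at eta)"
    by (intro has_derivative_sum has_derivative_mult_right has_derivative_diff has_derivative_add
        has_derivative_const has_derivative_mult_left has_derivative_fst has_derivative_snd
        has_derivative_ident has_derivative_ln partition_pos partition_has_derivative eta)
  ultimately show ?thesis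
    by (elim ssubst has_derivative_eq_rhs)
      (simp add: fun_eq_iff ef_mean_eq[OF eta] sum_distrib_left sum_subtractf sum.distrib divide_inverse algebra_simps)
qed

end

lemma mca_lower_bound_frozen_update_eq:
  assumes "d < D"
  obtains c where "\<And>p. mca_lower_bound_frozen mu h T1 T2 Phi D H N y q W V
      (W(d := (W d)(k := fst p))) (V(d := (V d)(k := snd p))) pri
    = c + (\<Sum>n<N. mca_expA mu h T1 T2 Phi H q W V n d k * ln (ef_p mu h T1 T2 (Phi p) (y n d)))"
proof -
  let ?j = "mca_hsel mu h T1 T2 Phi H W V"
  let ?l = "\<lambda>n d' w. ln (ef_p mu h T1 T2 (Phi w) (y n d'))"
  define R where "R n s = (if ?j d s = k then 0 else ?l n d (W d (?j d s), V d (?j d s)))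
    + (\<Sum>d'\<in>{..<D} - {d}. ?l n d' (W d' (?j d' s), V d' (?j d' s)))" for n s
  define c where "c = (\<Sum>n<N. \<Sum>s\<in>Pow {..<H}. q n s * (R n s + mca_log_prior H pri s))
    + mca_entropy N H q"
  have split: "(\<Sum>d'<D. ?l n d'
        ((W(d := (W d)(k := fst p))) d' (?j d' s), (V(d := (V d)(k := snd p))) d' (?j d' s)))
      = (if ?j d s = k then ?l n d p else 0) + R n s" for n s p
    using assms by (simp add: R_def sum.remove[of "{..<D}" d])
  have weight: "(\<Sum>s\<in>Pow {..<H}. q n s * ((if ?j d s = k then a else 0) + b s))
      = mca_expA mu h T1 T2 Phi H q W V n d k * a + (\<Sum>s\<in>Pow {..<H}. q n s * b s)" for n a b
  proof -
    have "q n s * ((if ?j d s = k then a else 0) + b s)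
        = q n s * mca_Aind mu h T1 T2 Phi H W V d k s * a + q n s * b s" for s
      by (simp add: mca_Aind_def distrib_left)
    then show ?thesis by (simp add: sum.distrib mca_expA_def sum_distrib_right)
  qed
  show ?thesis
  proof (rule that)
    fix p
    show "mca_lower_bound_frozen mu h T1 T2 Phi D H N y q W V
        (W(d := (W d)(k := fst p))) (V(d := (V d)(k := snd p))) pri
      = c + (\<Sum>n<N. mca_expA mu h T1 T2 Phi H q W V n d k * ln (ef_p mu h T1 T2 (Phi p) (y n d)))"
      unfolding mca_lower_bound_frozen_def split add.assoc weight c_def
      by (simp add: sum.distrib algebra_simps)
  qed
qed

theorem corollary1:
  fixes mu :: "real measure" and h T1 T2 :: "real \<Rightarrow> real"
    and Phi :: "real \<times> real \<Rightarrow> real \<times> real"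
    and D H N :: nat and y :: "nat \<Rightarrow> nat \<Rightarrow> real" and q :: "nat \<Rightarrow> nat set \<Rightarrow> real"
    and W V :: "nat \<Rightarrow> nat \<Rightarrow> real" and pri :: "nat \<Rightarrow> real" and d k :: nat
  assumes h_meas: "h \<in> borel_measurable borel" and h_nonneg: "\<And>y. h y \<ge> 0"
    and T1_meas: "T1 \<in> borel_measurable borel" and T2_meas: "T2 \<in> borel_measurable borel"
    and space_mu: "sets mu = sets borel"
    and T1_id: "\<And>y. T1 y = y"
    and dom_open: "open (ef_dom mu h T1 T2)"
    and mean_inj: "inj_on (ef_mean mu h T1 T2) (ef_dom mu h T1 T2)"
    and Phi_inv: "\<And>eta. eta \<in> ef_dom mu h T1 T2 \<Longrightarrow> Phi (ef_mean mu h T1 T2 eta) = eta"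
    and Theta_ok: "\<And>d' k'. d' < D \<Longrightarrow> k' < H \<Longrightarrow>
                     (W d' k', V d' k') \<in> ef_mean mu h T1 T2 ` ef_dom mu h T1 T2"
    and q_nonneg: "\<And>n s. n < N \<Longrightarrow> s \<in> Pow {..<H} \<Longrightarrow> q n s \<ge> 0"
    and q_sum: "\<And>n. n < N \<Longrightarrow> (\<Sum>s\<in>Pow {..<H}. q n s) = 1"
    and data_supp: "\<And>n d'. n < N \<Longrightarrow> d' < D \<Longrightarrow> h (y n d') > 0"
    and d_lt: "d < D" and k_lt: "k < H"
    and denom_pos: "(\<Sum>n<N. mca_expA mu h T1 T2 Phi H q W V n d k) > 0"
  shows "((\<lambda>p. mca_lower_bound_frozen mu h T1 T2 Phi D H N y q W V
               (W(d := (W d)(k := fst p))) (V(d := (V d)(k := snd p))) pri)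
            has_derivative (\<lambda>_. 0)) (at (W d k, V d k))
         \<longleftrightarrow>
         W d k = (\<Sum>n<N. mca_expA mu h T1 T2 Phi H q W V n d k * y n d)
                 / (\<Sum>n<N. mca_expA mu h T1 T2 Phi H q W V n d k)
         \<and> V d k = (\<Sum>n<N. mca_expA mu h T1 T2 Phi H q W V n d k * T2 (y n d))
                 / (\<Sum>n<N. mca_expA mu h T1 T2 Phi H q W V n d k)"
proof -
  interpret exp_family mu h T1 T2
    by unfold_locales (fact h_meas h_nonneg T1_meas T2_meas space_mu dom_open)+
  let ?E = "\<lambda>n. mca_expA mu h T1 T2 Phi H q W V n d k"
  obtain eta0 where eta0: "eta0 \<in> param_dom" and mean0: "ef_mean mu h T1 T2 eta0 = (W d k, V d k)"
    using Theta_ok[OF d_lt k_lt] by force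
  obtain c where lower_bound: "\<And>p. mca_lower_bound_frozen mu h T1 T2 Phi D H N y q W V
      (W(d := (W d)(k := fst p))) (V(d := (V d)(k := snd p))) pri
    = c + (\<Sum>n<N. ?E n * ln (ef_p mu h T1 T2 (Phi p) (y n d)))"
    using mca_lower_bound_frozen_update_eq[OF d_lt] by blast
  let ?K = "\<lambda>eta. c + (\<Sum>n<N. ?E n * ln (ef_p mu h T1 T2 eta (y n d)))"
  have "(?K has_derivative (\<lambda>u. fst u * (\<Sum>n<N. ?E n * (y n d - W d k))
      + snd u * (\<Sum>n<N. ?E n * (T2 (y n d) - V d k)))) (at eta0)"
    using weighted_log_likelihood_has_derivative[OF eta0, of "{..<N}" "\<lambda>n. y n d" ?E]
      data_supp[OF _ d_lt] mean0 T1_id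
    by (intro has_derivative_add[OF has_derivative_const, THEN has_derivative_eq_rhs]) auto
  from has_derivative_comp_inverse_eq_0_iff[OF open_dom eta0 continuous_on_ef_mean Phi_inv
      ef_mean_has_derivative[OF eta0] inj_mean_derivative[OF mean_inj eta0] this]
  show ?thesis
    using denom_pos unfolding mean0 comp_def lower_bound
    by (simp add: pair_linear_form_eq_0_iff sum_weighted_deviation_eq_0_iff)
qed

end
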